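(* Let $X$ be an $E\mathcal M$-simplicial set, $x\in X_n$, and $u_0,\dots,u_n\in\mathcal M$. Then for each $0\le k\le n$, $(u_0,\dots,u_n).x$ is $k$-supported on $\mathrm{im}(u_k)$. Moreover, if $x$ is $k$-supported on some co-infinite set $A$, then $(u_0,\dots,u_n).x$ is $k$-supported on $u_k(A)$.
   Context: $\omega=\{1,2,\dots\}$, $\mathcal M$ the monoid of injections $\omega\to\omega$, $\mathcal M_A$ the submonoid fixing $A\subset\omega$ elementwise; $A$ co-infinite if $\omega\setminus A$ is infinite. $E\mathcal M$ is the simplicial monoid with $(E\mathcal M)_n=\mathcal M^{1+n}$, pointwise multiplication, structure maps by precomposition; an $E\mathcal M$-simplicial set is a simplicial set with left $E\mathcal M$-action. $x\in X_n$ is $k$-supported on $A$ if $i_k(g).x=x$ for all $g\in\mathcal M_A$, where $i_k\colon\mathcal M\to\mathcal M^{1+n}$ is the inclusion of the $(1+k)$-th factor. *)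

theory Defs
  imports Main
begin

text \<open>Injections omega -> omega are represented as functions
  nat => nat that are injective on omega, map omega into omega, and send the
  junk point 0 to 0 (so that each injection has a unique representative).\<close>

definition omega :: "nat set" where
  "omega = {1..}"

definition Mon :: "(nat \<Rightarrow> nat) set" where
  "Mon = {f. inj_on f omega \<and> f ` omega \<subseteq> omega \<and> f 0 = 0}"

definition Mon_fix :: "nat set \<Rightarrow> (nat \<Rightarrow> nat) set" where
  "Mon_fix A = {g \<in> Mon. \<forall>a\<in>A. g a = a}"

definition EM_n :: "nat \<Rightarrow> (nat \<Rightarrow> nat) list set" where
  "EM_n n = {us. length us = Suc n \<and> set us \<subseteq> Mon}"

definition incl :: "nat \<Rightarrow> nat \<Rightarrow> (nat \<Rightarrow> nat) \<Rightarrow> (nat \<Rightarrow> nat) list" where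
  "incl n k g = (replicate (Suc n) id)[k := g]"

definition simplicial_set ::
  "(nat \<Rightarrow> 'x set) \<Rightarrow> (nat \<Rightarrow> nat \<Rightarrow> 'x \<Rightarrow> 'x) \<Rightarrow> (nat \<Rightarrow> nat \<Rightarrow> 'x \<Rightarrow> 'x) \<Rightarrow> bool" where
  "simplicial_set X d s \<longleftrightarrow>
     (\<forall>n i x. 1 \<le> n \<and> i \<le> n \<and> x \<in> X n \<longrightarrow> d n i x \<in> X (n - 1)) \<and>
     (\<forall>n i x. i \<le> n \<and> x \<in> X n \<longrightarrow> s n i x \<in> X (Suc n)) \<and>
     (\<forall>n i j x. 2 \<le> n \<and> i < j \<and> j \<le> n \<and> x \<in> X n \<longrightarrow>
        d (n - 1) i (d n j x) = d (n - 1) (j - 1) (d n i x)) \<and>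
     (\<forall>n i j x. 1 \<le> n \<and> i < j \<and> j \<le> n \<and> x \<in> X n \<longrightarrow>
        d (Suc n) i (s n j x) = s (n - 1) (j - 1) (d n i x)) \<and>
     (\<forall>n j x. j \<le> n \<and> x \<in> X n \<longrightarrow>
        d (Suc n) j (s n j x) = x \<and> d (Suc n) (Suc j) (s n j x) = x) \<and>
     (\<forall>n i j x. 1 \<le> n \<and> Suc j < i \<and> i \<le> Suc n \<and> x \<in> X n \<longrightarrow>
        d (Suc n) i (s n j x) = s (n - 1) j (d n (i - 1) x)) \<and>
     (\<forall>n i j x. i \<le> j \<and> j \<le> n \<and> x \<in> X n \<longrightarrow>
        s (Suc n) i (s n j x) = s (Suc n) (Suc j) (s n i x))"

text \<open>An EM-simplicial set: a simplicial set with a left action of the simplicial monoid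
  EM, i.e. levelwise monoid actions of M^(1+n) on X n (pointwise multiplication)
  compatible with the structure maps, which act on EM by precomposition
  (face d_i deletes the i-th entry, degeneracy s_i repeats the i-th entry).\<close>

definition EM_sset ::
  "(nat \<Rightarrow> 'x set) \<Rightarrow> (nat \<Rightarrow> nat \<Rightarrow> 'x \<Rightarrow> 'x) \<Rightarrow> (nat \<Rightarrow> nat \<Rightarrow> 'x \<Rightarrow> 'x)
   \<Rightarrow> (nat \<Rightarrow> (nat \<Rightarrow> nat) list \<Rightarrow> 'x \<Rightarrow> 'x) \<Rightarrow> bool" where
  "EM_sset X d s act \<longleftrightarrow>
     simplicial_set X d s \<and>
     (\<forall>n us x. us \<in> EM_n n \<and> x \<in> X n \<longrightarrow> act n us x \<in> X n) \<and>
     (\<forall>n x. x \<in> X n \<longrightarrow> act n (replicate (Suc n) id) x = x) \<and>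
     (\<forall>n us vs x. us \<in> EM_n n \<and> vs \<in> EM_n n \<and> x \<in> X n \<longrightarrow>
        act n us (act n vs x) = act n (map2 (\<circ>) us vs) x) \<and>
     (\<forall>n i us x. 1 \<le> n \<and> i \<le> n \<and> us \<in> EM_n n \<and> x \<in> X n \<longrightarrow>
        d n i (act n us x) = act (n - 1) (take i us @ drop (Suc i) us) (d n i x)) \<and>
     (\<forall>n i us x. i \<le> n \<and> us \<in> EM_n n \<and> x \<in> X n \<longrightarrow>
        s n i (act n us x) = act (Suc n) (take (Suc i) us @ drop i us) (s n i x))"

definition k_supported ::
  "(nat \<Rightarrow> (nat \<Rightarrow> nat) list \<Rightarrow> 'x \<Rightarrow> 'x) \<Rightarrow> nat \<Rightarrow> nat \<Rightarrow> nat set \<Rightarrow> 'x \<Rightarrow> bool" where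
  "k_supported act n k A x \<longleftrightarrow> (\<forall>g \<in> Mon_fix A. act n (incl n k g) x = x)"

end

theory Submission
  imports Defs "HOL-Library.Countable_Set"
begin

text \<open>
  If \<open>g\<close> fixes \<open>im(u\<^sub>k)\<close> then \<open>g u\<^sub>k = u\<^sub>k\<close>, so \<open>i\<^sub>k(g)\<close> does not change
  \<open>(u\<^sub>0,\<dots>,u\<^sub>n)\<close>. For the second claim it suffices to show that \<open>x\<close> is moved equally by
  two tuples differing only in their \<open>k\<close>-th entries \<open>a\<close> and \<open>b\<close>, provided \<open>a\<close> and \<open>b\<close> agree
  on \<open>A\<close>; apply this to \<open>a = g u\<^sub>k\<close> and \<open>b = u\<^sub>k\<close>. Since \<open>\<omega> - A\<close> is infinite there is an
  injection \<open>c\<close> agreeing with \<open>a\<close> on \<open>A\<close> whose image contains the images of \<open>a\<close> and \<open>b\<close>.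
  Then \<open>a = c h\<close> and \<open>b = c h'\<close> with \<open>h = c\<^sup>-\<^sup>1 a\<close> and \<open>h' = c\<^sup>-\<^sup>1 b\<close> fixing \<open>A\<close>, and
  \<open>k\<close>-support of \<open>x\<close> on \<open>A\<close> lets us cancel \<open>h\<close> and \<open>h'\<close>.
\<close>

lemma infinite_nat_sets_bij_betw:
  fixes S T :: "nat set"
  assumes "infinite S" "infinite T"
  obtains f where "bij_betw f S T"
  using bij_betw_trans[OF to_nat_on_infinite bij_betw_from_nat_into] assms countableI_type
  by blast

lemma notin_omega_eq_0: "y \<notin> omega \<Longrightarrow> y = 0"
  by (simp add: omega_def)

lemma id_in_Mon: "id \<in> Mon"
  by (auto simp: Mon_def)

lemma comp_in_Mon: "a \<in> Mon \<Longrightarrow> b \<in> Mon \<Longrightarrow> a \<circ> b \<in> Mon"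
  unfolding Mon_def by (auto intro: comp_inj_on inj_on_subset)

lemma Mon_factor_through:
  assumes a: "a \<in> Mon" and c: "c \<in> Mon" and im: "a ` omega \<subseteq> c ` omega"
    and agree: "\<forall>y\<in>A. a y = c y"
  obtains h where "h \<in> Mon_fix A" "a = c \<circ> h"
proof
  define h where "h y = (if y \<in> omega then inv_into omega c (a y) else 0)" for y
  have inj_c: "inj_on c omega" and inj_a: "inj_on a omega" using a c by (auto simp: Mon_def)
  have ch: "c (h y) = a y" and h_omega: "h y \<in> omega" if "y \<in> omega" for y
    using that im by (auto simp: h_def f_inv_into_f inv_into_into)
  show "a = c \<circ> h"
  proof
    fix y
    show "a y = (c \<circ> h) y"
      using ch a c notin_omega_eq_0[of y] by (cases "y \<in> omega") (auto simp: h_def Mon_def)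
  qed
  have "inj_on h omega"
    by (rule inj_onI) (metis ch inj_a inj_onD)
  moreover have "\<forall>y\<in>A. h y = y"
    using agree inj_c notin_omega_eq_0 by (auto simp: h_def)
  ultimately show "h \<in> Mon_fix A"
    using h_omega by (auto simp: Mon_fix_def Mon_def h_def omega_def)
qed

lemma Mon_common_extension:
  assumes a: "a \<in> Mon" and b: "b \<in> Mon" and A: "A \<subseteq> omega"
    and coinf: "infinite (omega - A)" and agree: "\<forall>y\<in>A. a y = b y"
  obtains c where "c \<in> Mon" "\<forall>y\<in>A. c y = a y" "a ` omega \<union> b ` omega \<subseteq> c ` omega"
proof -
  let ?B = "omega - A"
  let ?T = "a ` ?B \<union> b ` ?B"
  have inj_a: "inj_on a omega" and inj_b: "inj_on b omega" using a b by (auto simp: Mon_def)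
  have "infinite (a ` ?B)"
    using coinf inj_a by (metis Diff_subset finite_imageD inj_on_subset)
  then obtain \<phi> where \<phi>: "bij_betw \<phi> ?B ?T"
    using coinf infinite_nat_sets_bij_betw by (metis infinite_Un)
  define c where "c y = (if y \<in> ?B then \<phi> y else a y)" for y
  have bA: "b ` A = a ` A" using agree by (auto simp: image_def)
  have c_A: "c ` A = a ` A" and c_B: "c ` ?B = ?T"
    using \<phi> by (auto simp: c_def bij_betw_def)
  have "a ` ?B \<inter> a ` A = {}" "b ` ?B \<inter> b ` A = {}"
    using inj_a inj_b A by (auto dest: inj_onD)
  then have "c ` A \<inter> c ` ?B = {}" using c_A c_B bA by auto
  moreover have "inj_on c A" using inj_on_subset[OF inj_a A] by (simp add: c_def inj_on_def)
  moreover have "inj_on c ?B" using \<phi> by (simp add: c_def bij_betw_def inj_on_def)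
  moreover have "A - ?B = A" "?B - A = ?B" by auto
  ultimately have "inj_on c (A \<union> ?B)" unfolding inj_on_Un by metis
  moreover have omega_split: "omega = A \<union> ?B" using A by blast
  ultimately have "inj_on c omega" by simp
  have image_split: "f ` omega = f ` A \<union> f ` ?B" for f :: "nat \<Rightarrow> nat"
    using omega_split by (metis image_Un)
  have c_omega: "c ` omega = a ` A \<union> ?T"
    using c_A c_B image_split[of c] by simp
  show thesis
  proof (rule that)
    have "a ` A \<union> ?T \<subseteq> omega" using a b A by (auto simp: Mon_def)
    moreover have "c 0 = 0" using a by (simp add: c_def omega_def Mon_def)
    ultimately show "c \<in> Mon" using \<open>inj_on c omega\<close> c_omega by (simp add: Mon_def)
    show "\<forall>y\<in>A. c y = a y" by (simp add: c_def)
    show "a ` omega \<union> b ` omega \<subseteq> c ` omega" using image_split c_omega bA by auto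
  qed
qed

lemma incl_nth: "i \<le> n \<Longrightarrow> incl n k g ! i = (if i = k then g else id)"
  by (simp add: incl_def nth_list_update del: replicate_Suc)

lemma incl_in_EM_n: "g \<in> Mon \<Longrightarrow> incl n k g \<in> EM_n n"
  using set_update_subset_insert[of "replicate (Suc n) id" k g] id_in_Mon
  by (auto simp: EM_n_def incl_def simp del: replicate_Suc)

lemma list_update_in_EM_n: "us \<in> EM_n n \<Longrightarrow> a \<in> Mon \<Longrightarrow> us[k := a] \<in> EM_n n"
  unfolding EM_n_def by (auto dest!: set_update_subset_insert[THEN subsetD])

lemma nth_in_EM_n: "us \<in> EM_n n \<Longrightarrow> k \<le> n \<Longrightarrow> us ! k \<in> Mon"
  unfolding EM_n_def by auto

lemma map2_comp_incl_left:
  "length vs = Suc n \<Longrightarrow> k \<le> n \<Longrightarrow> map2 (\<circ>) (incl n k g) vs = vs[k := g \<circ> vs ! k]"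
  by (intro nth_equalityI) (auto simp: incl_nth nth_list_update incl_def simp del: replicate_Suc)

lemma map2_comp_incl_right:
  "length vs = Suc n \<Longrightarrow> k \<le> n \<Longrightarrow> map2 (\<circ>) vs (incl n k g) = vs[k := vs ! k \<circ> g]"
  by (intro nth_equalityI) (auto simp: incl_nth nth_list_update incl_def simp del: replicate_Suc)

context
  fixes X :: "nat \<Rightarrow> 'x set" and d s :: "nat \<Rightarrow> nat \<Rightarrow> 'x \<Rightarrow> 'x"
    and act :: "nat \<Rightarrow> (nat \<Rightarrow> nat) list \<Rightarrow> 'x \<Rightarrow> 'x"
  assumes EM: "EM_sset X d s act"
begin

lemma act_act:
  "us \<in> EM_n n \<Longrightarrow> vs \<in> EM_n n \<Longrightarrow> x \<in> X n \<Longrightarrow>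
    act n us (act n vs x) = act n (map2 (\<circ>) us vs) x"
  using EM unfolding EM_sset_def by blast

lemma act_incl_act:
  assumes "x \<in> X n" "us \<in> EM_n n" "k \<le> n" "g \<in> Mon"
  shows "act n (incl n k g) (act n us x) = act n (us[k := g \<circ> us ! k]) x"
  using act_act[OF incl_in_EM_n[OF \<open>g \<in> Mon\<close>] assms(2,1)] assms(2,3)
  by (simp add: map2_comp_incl_left EM_n_def)

lemma act_update_comp_Mon_fix:
  assumes x: "x \<in> X n" and us: "us \<in> EM_n n" and k: "k \<le> n" and a: "a \<in> Mon"
    and h: "h \<in> Mon_fix A" and supp: "k_supported act n k A x"
  shows "act n (us[k := a \<circ> h]) x = act n (us[k := a]) x"
proof -
  have "h \<in> Mon" using h by (simp add: Mon_fix_def)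
  have "us[k := a \<circ> h] = map2 (\<circ>) (us[k := a]) (incl n k h)"
    using us k by (simp add: map2_comp_incl_right EM_n_def)
  then have "act n (us[k := a \<circ> h]) x = act n (us[k := a]) (act n (incl n k h) x)"
    using act_act[OF list_update_in_EM_n[OF us a] incl_in_EM_n[OF \<open>h \<in> Mon\<close>] x] by simp
  also have "act n (incl n k h) x = x"
    using h supp by (simp add: k_supported_def)
  finally show ?thesis .
qed

lemma act_update_eq_if_agree:
  assumes x: "x \<in> X n" and us: "us \<in> EM_n n" and k: "k \<le> n"
    and A: "A \<subseteq> omega" "infinite (omega - A)" and supp: "k_supported act n k A x"
    and a: "a \<in> Mon" and b: "b \<in> Mon" and agree: "\<forall>y\<in>A. a y = b y"
  shows "act n (us[k := a]) x = act n (us[k := b]) x"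
proof -
  obtain c where c: "c \<in> Mon" "\<forall>y\<in>A. c y = a y" "a ` omega \<union> b ` omega \<subseteq> c ` omega"
    using Mon_common_extension[OF a b A agree] .
  obtain h\<^sub>a where h\<^sub>a: "h\<^sub>a \<in> Mon_fix A" "a = c \<circ> h\<^sub>a"
    using Mon_factor_through[of a c A] a c by auto
  obtain h\<^sub>b where h\<^sub>b: "h\<^sub>b \<in> Mon_fix A" "b = c \<circ> h\<^sub>b"
    using Mon_factor_through[of b c A] b c agree by auto
  have "act n (us[k := a]) x = act n (us[k := c]) x"
    using act_update_comp_Mon_fix[OF x us k c(1) h\<^sub>a(1) supp] h\<^sub>a(2) by simp
  also have "\<dots> = act n (us[k := b]) x"
    using act_update_comp_Mon_fix[OF x us k c(1) h\<^sub>b(1) supp] h\<^sub>b(2) by simp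
  finally show ?thesis .
qed

end

theorem lemma2p5:
  fixes X :: "nat \<Rightarrow> 'x set"
    and d s :: "nat \<Rightarrow> nat \<Rightarrow> 'x \<Rightarrow> 'x"
    and act :: "nat \<Rightarrow> (nat \<Rightarrow> nat) list \<Rightarrow> 'x \<Rightarrow> 'x"
    and n k :: nat and x :: 'x and us :: "(nat \<Rightarrow> nat) list"
  assumes "EM_sset X d s act"
    and "x \<in> X n"
    and "us \<in> EM_n n"
    and "k \<le> n"
  shows "k_supported act n k ((us ! k) ` omega) (act n us x)
         \<and> (\<forall>A. A \<subseteq> omega \<and> infinite (omega - A) \<and> k_supported act n k A x
               \<longrightarrow> k_supported act n k ((us ! k) ` A) (act n us x))"
proof -
  let ?u = "us ! k"
  have u: "?u \<in> Mon" using assms(3,4) by (rule nth_in_EM_n)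
  have act_g: "act n (incl n k g) (act n us x) = act n (us[k := g \<circ> ?u]) x"
    if "g \<in> Mon_fix B" for g B
    using act_incl_act[OF assms] that by (simp add: Mon_fix_def)
  have "g \<circ> ?u = ?u" if "g \<in> Mon_fix (?u ` omega)" for g
    using that u notin_omega_eq_0 by (fastforce simp: Mon_fix_def Mon_def)
  then have "k_supported act n k (?u ` omega) (act n us x)"
    using act_g by (simp add: k_supported_def)
  moreover have "k_supported act n k (?u ` A) (act n us x)"
    if A: "A \<subseteq> omega" "infinite (omega - A)" and supp: "k_supported act n k A x" for A
    unfolding k_supported_def
  proof
    fix g assume g: "g \<in> Mon_fix (?u ` A)"
    then have "g \<in> Mon" "\<forall>y\<in>A. (g \<circ> ?u) y = ?u y" by (auto simp: Mon_fix_def)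
    then have "act n (us[k := g \<circ> ?u]) x = act n (us[k := ?u]) x"
      using act_update_eq_if_agree[OF assms A supp comp_in_Mon[OF _ u] u] by blast
    then show "act n (incl n k g) (act n us x) = act n us x"
      using act_g[OF g] by simp
  qed
  ultimately show ?thesis by blast
qed

end
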